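(* Let $\Lambda\subseteq\Sigma_A$ be a shift space, let $x\in\Lambda^{\mathrm{fin}}$ and let $F\subset L_\Lambda$ be a nonempty finite set. Then $Z(x)\cap\Lambda$ and $Z(x,F)\cap\Lambda$ are finitely defined sets in $\Lambda$. The anticipation of $Z(x)\cap\Lambda$ is $l(x)-1$ and the anticipation of $Z(x,F)\cap\Lambda$ is $l(x)$.
   Context: $A$ is a countable discrete alphabet; $\varepsilon$ is a new symbol (empty letter), $\tilde A=A\cup\{\varepsilon\}$. $\Sigma_A$ consists of $A^{\mathbb N}$ together with (when $A$ is infinite) the finite sequences: sequences in $\tilde A$ containing some $\varepsilon$, with all entries after the first $\varepsilon$ equal to $\varepsilon$. The length $l(x)$ is the number of entries before the first $\varepsilon$ ($\infty$ if none); $\mathcal O=(\varepsilon\varepsilon\dots)$ is the empty sequence. For finite $x$ and finite $F\subset A$: $Z(x,F)=\{y\in\Sigma_A: y_i=x_i\ (1\le i\le l(x)),\ y_{l(x)+1}\notin F\}$ and $Z(x)=Z(x,\emptyset)$; these generate the topology of $\Sigma_A$. The shift is $\sigma((x_i)_i)=(x_{i+1})_i$. For $\Lambda\subseteq\Sigma_A$: $\Lambda^{\mathrm{fin}}$ is the set of finite sequences in $\Lambda$; $B_n(\Lambda)\subseteq\tilde A^n$ is the set of length-$n$ words occurring consecutively in elements of $\Lambda$, $B(\Lambda)=\bigcup_n B_n(\Lambda)$, $L_\Lambda=B_1(\Lambda)\setminus\{\varepsilon\}$; $\mathcal F(\Lambda,a)=\{b\in B_1(\Lambda): ab\in B(\Lambda)\}$.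 A shift space is a closed $\Lambda\subseteq\Sigma_A$ with $\sigma(\Lambda)\subseteq\Lambda$ such that $\mathcal O\in\Lambda$ iff $L_\Lambda$ is infinite, and a finite $x\neq\mathcal O$ lies in $\Lambda$ iff $\mathcal F(\Lambda,x)$ is infinite. A set $C\subseteq\Lambda$ is finitely defined in $\Lambda$ if there exist $I,J\subseteq\mathbb N$, integers $\ell_i,n_j\ge0$ and words $b_i,d_j\in B(\Sigma_A)$ with $C=\{x\in\Lambda: (x_1\dots x_{1+\ell_i})=b_i\text{ for some } i\in I\}$ and $\Lambda\setminus C=\{x\in\Lambda: (x_1\dots x_{1+n_j})=d_j\text{ for some } j\in J\}$; then $C$ is said to have anticipation $\sup_{i\in I}\ell_i$. *)

theory Defs
  imports "HOL-Analysis.Analysis" "HOL-Library.Extended_Nat"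
begin

text \<open>Letters are elements of a set A of type 'a; the empty letter is None,
a letter a is Some a.  Sequences are maps nat => 'a option, where the
paper's entry x_i (i >= 1) is  x (i - 1)  (0-based indexing).\<close>

type_synonym 'a seq = "nat \<Rightarrow> 'a option"

definition empty_seq :: "'a seq" where
  "empty_seq = (\<lambda>_. None)"

definition is_fin :: "'a seq \<Rightarrow> bool" where
  "is_fin x \<longleftrightarrow> (\<exists>i. x i = None)"

definition seq_len :: "'a seq \<Rightarrow> enat" where
  "seq_len x = (if \<exists>i. x i = None then enat (LEAST i. x i = None) else \<infinity>)"

definition good_seq :: "'a set \<Rightarrow> 'a seq \<Rightarrow> bool" where
  "good_seq A x \<longleftrightarrow> (\<forall>i. x i = None \<or> x i \<in> Some ` A) \<and> (\<forall>i. x i = None \<longrightarrow> x (Suc i) = None)"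

definition SigmaA :: "'a set \<Rightarrow> 'a seq set" where
  "SigmaA A = {x. good_seq A x \<and> (finite A \<longrightarrow> \<not> is_fin x)}"

definition Zcyl :: "'a set \<Rightarrow> 'a seq \<Rightarrow> 'a set \<Rightarrow> 'a seq set" where
  "Zcyl A x F = {y \<in> SigmaA A. (\<forall>i. enat i < seq_len x \<longrightarrow> y i = x i)
                       \<and> y (the_enat (seq_len x)) \<notin> Some ` F}"

definition sigma_top :: "'a set \<Rightarrow> 'a seq topology" where
  "sigma_top A = topology_generated_by
     {Zcyl A x F | x F. good_seq A x \<and> is_fin x \<and> finite F \<and> F \<subseteq> A}"

definition shift :: "'a seq \<Rightarrow> 'a seq" where
  "shift x = (\<lambda>i. x (Suc i))"

text \<open>the word (y_{k+1} ... y_{k+n})\<close>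
definition word_at :: "'a seq \<Rightarrow> nat \<Rightarrow> nat \<Rightarrow> 'a option list" where
  "word_at y k n = map (\<lambda>i. y (k + i)) [0..<n]"

definition Bn :: "'a seq set \<Rightarrow> nat \<Rightarrow> 'a option list set" where
  "Bn \<Lambda> n = {w. length w = n \<and> (\<exists>y\<in>\<Lambda>. \<exists>k. w = word_at y k n)}"

definition Bwords :: "'a seq set \<Rightarrow> 'a option list set" where
  "Bwords \<Lambda> = (\<Union>n\<in>{1..}. Bn \<Lambda> n)"

definition B1 :: "'a seq set \<Rightarrow> 'a option set" where
  "B1 \<Lambda> = {c. [c] \<in> Bn \<Lambda> 1}"

definition Lset :: "'a seq set \<Rightarrow> 'a set" where
  "Lset \<Lambda> = {a. Some a \<in> B1 \<Lambda>}"

definition follower :: "'a seq set \<Rightarrow> 'a option list \<Rightarrow> 'a option set" where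
  "follower \<Lambda> w = {c \<in> B1 \<Lambda>. w @ [c] \<in> Bwords \<Lambda>}"

definition shift_space :: "'a set \<Rightarrow> 'a seq set \<Rightarrow> bool" where
  "shift_space A \<Lambda> \<longleftrightarrow>
     closedin (sigma_top A) \<Lambda> \<and> shift ` \<Lambda> \<subseteq> \<Lambda>
     \<and> (empty_seq \<in> \<Lambda> \<longleftrightarrow> infinite (Lset \<Lambda>))
     \<and> (\<forall>x \<in> SigmaA A. is_fin x \<and> x \<noteq> empty_seq \<longrightarrow>
          (x \<in> \<Lambda> \<longleftrightarrow> infinite (follower \<Lambda> (word_at x 0 (the_enat (seq_len x))))))"

definition fin_def_by ::
  "'a set \<Rightarrow> 'a seq set \<Rightarrow> 'a seq set \<Rightarrow> nat set \<Rightarrow> nat set \<Rightarrow> (nat \<Rightarrow> nat) \<Rightarrow> (nat \<Rightarrow> nat)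
     \<Rightarrow> (nat \<Rightarrow> 'a option list) \<Rightarrow> (nat \<Rightarrow> 'a option list) \<Rightarrow> bool" where
  "fin_def_by A \<Lambda> C I J l n b d \<longleftrightarrow>
     (\<forall>i\<in>I. b i \<in> Bwords (SigmaA A)) \<and> (\<forall>j\<in>J. d j \<in> Bwords (SigmaA A))
     \<and> C = {x \<in> \<Lambda>. \<exists>i\<in>I. word_at x 0 (1 + l i) = b i}
     \<and> \<Lambda> - C = {x \<in> \<Lambda>. \<exists>j\<in>J. word_at x 0 (1 + n j) = d j}"

definition finitely_defined :: "'a set \<Rightarrow> 'a seq set \<Rightarrow> 'a seq set \<Rightarrow> bool" where
  "finitely_defined A \<Lambda> C \<longleftrightarrow> C \<subseteq> \<Lambda> \<and> (\<exists>I J l n b d. fin_def_by A \<Lambda> C I J l n b d)"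

definition fin_def_anticipation :: "'a set \<Rightarrow> 'a seq set \<Rightarrow> 'a seq set \<Rightarrow> nat \<Rightarrow> bool" where
  "fin_def_anticipation A \<Lambda> C k \<longleftrightarrow> C \<subseteq> \<Lambda> \<and>
     (\<exists>I J l n b d. fin_def_by A \<Lambda> C I J l n b d \<and> (SUP i\<in>I. enat (l i)) = enat k)"

end

theory Submission
  imports Defs
begin

text \<open>Over a countable alphabet there are only countably many words of each length, and the
  definition of a finitely defined set admits countably many defining words.  Hence any subset
  of \<open>\<Lambda>\<close> whose membership depends only on the first \<open>k + 1\<close> letters is finitely defined with
  anticipation \<open>k\<close>: take as \<open>b\<^sub>i\<close> all prefixes of length \<open>k + 1\<close> of its elements and as \<open>d\<^sub>j\<close>
  those of the elements of its complement.  Membership in \<open>Z(x)\<close> depends on the first \<open>l(x)\<close>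
  letters, membership in \<open>Z(x,F)\<close> on the first \<open>l(x) + 1\<close>.\<close>

definition prefix_determined :: "'a seq set \<Rightarrow> 'a seq set \<Rightarrow> nat \<Rightarrow> bool" where
  "prefix_determined \<Lambda> C n \<longleftrightarrow>
     (\<forall>y\<in>\<Lambda>. \<forall>z\<in>\<Lambda>. (\<forall>i<n. y i = z i) \<longrightarrow> (y \<in> C \<longleftrightarrow> z \<in> C))"

lemma prefix_determined_mono:
  "prefix_determined \<Lambda> C n \<Longrightarrow> n \<le> n' \<Longrightarrow> prefix_determined \<Lambda> C n'"
  unfolding prefix_determined_def by (meson order_less_le_trans)

lemma prefix_determined_Diff:
  "prefix_determined \<Lambda> C n \<Longrightarrow> prefix_determined \<Lambda> (\<Lambda> - C) n"
  unfolding prefix_determined_def by blast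

lemma word_at_eq_iff: "word_at y 0 n = word_at z 0 n \<longleftrightarrow> (\<forall>i<n. y i = z i)"
  unfolding word_at_def by (auto simp: map_eq_conv)

lemma shift_space_subset_SigmaA:
  assumes "shift_space A \<Lambda>"
  shows "\<Lambda> \<subseteq> SigmaA A"
proof -
  have "\<Lambda> \<subseteq> topspace (sigma_top A)"
    using assms closedin_subset unfolding shift_space_def by blast
  also have "\<dots> \<subseteq> SigmaA A" unfolding sigma_top_def Zcyl_def by auto
  finally show ?thesis .
qed

lemma word_at_in_Bwords:
  assumes "y \<in> SigmaA A"
  shows "word_at y 0 (Suc k) \<in> Bwords (SigmaA A)"
proof -
  have "word_at y 0 (Suc k) \<in> Bn (SigmaA A) (Suc k)"
    unfolding Bn_def using assms by (auto simp: word_at_def intro!: bexI[of _ y] exI[of _ 0])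
  then show ?thesis unfolding Bwords_def by auto
qed

lemma countable_prefix_words:
  assumes "countable A" "S \<subseteq> SigmaA A"
  shows "countable ((\<lambda>y. word_at y 0 n) ` S)"
proof (rule countable_subset)
  show "(\<lambda>y. word_at y 0 n) ` S \<subseteq> lists (insert None (Some ` A))"
  proof
    fix w assume "w \<in> (\<lambda>y. word_at y 0 n) ` S"
    then obtain y where "y \<in> S" "w = word_at y 0 n" by blast
    moreover have "\<forall>i. y i \<in> insert None (Some ` A)"
      using \<open>y \<in> S\<close> assms(2) unfolding SigmaA_def good_seq_def by blast
    ultimately show "w \<in> lists (insert None (Some ` A))" by (auto simp: word_at_def)
  qed
  show "countable (lists (insert None (Some ` A)))" using assms(1) by simp
qed

lemma prefix_determined_eq_prefix_preimage:
  assumes "prefix_determined \<Lambda> C n" "C \<subseteq> \<Lambda>"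
  shows "C = {y \<in> \<Lambda>. word_at y 0 n \<in> (\<lambda>z. word_at z 0 n) ` C}"
proof (intro equalityI subsetI)
  fix y assume "y \<in> {y \<in> \<Lambda>. word_at y 0 n \<in> (\<lambda>z. word_at z 0 n) ` C}"
  then obtain z where "y \<in> \<Lambda>" "z \<in> C" "word_at y 0 n = word_at z 0 n" by blast
  then show "y \<in> C" using assms unfolding prefix_determined_def word_at_eq_iff by blast
qed (use assms(2) in blast)

text \<open>The index set is empty or all of \<open>\<nat>\<close>, since \<^const>\<open>from_nat_into\<close> enumerates
  only nonempty countable sets.\<close>

lemma preimage_countable_eq_enumeration:
  assumes "countable P"
  shows "{y \<in> S. f y \<in> P} = {y \<in> S. \<exists>i\<in>{i. P \<noteq> {}}. f y = from_nat_into P i}"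
proof (cases "P = {}")
  case False
  then have "range (from_nat_into P) = P" using assms by simp
  then have "{y \<in> S. f y \<in> P} = {y \<in> S. f y \<in> range (from_nat_into P)}" by simp
  then show ?thesis using False by (simp add: image_iff)
qed simp

lemma prefix_determined_fin_def_anticipation:
  assumes "countable A" "\<Lambda> \<subseteq> SigmaA A" "C \<subseteq> \<Lambda>" "C \<noteq> {}"
    and "prefix_determined \<Lambda> C (Suc k)"
  shows "fin_def_anticipation A \<Lambda> C k"
proof -
  define prefix where "prefix y = word_at y 0 (Suc k)" for y :: "'a seq"
  define P where "P = prefix ` C"
  define Q where "Q = prefix ` (\<Lambda> - C)"
  have "C \<subseteq> SigmaA A" "\<Lambda> - C \<subseteq> SigmaA A" using assms(2,3) by auto
  then have "countable P" "countable Q" "P \<subseteq> Bwords (SigmaA A)" "Q \<subseteq> Bwords (SigmaA A)"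
    unfolding P_def Q_def prefix_def
    by (auto intro: countable_prefix_words[OF assms(1)] word_at_in_Bwords)
  have "P \<noteq> {}" using assms(4) unfolding P_def by blast
  have C_eq: "C = {y \<in> \<Lambda>. prefix y \<in> P}"
    unfolding P_def prefix_def by (rule prefix_determined_eq_prefix_preimage[OF assms(5,3)])
  have D_eq: "\<Lambda> - C = {y \<in> \<Lambda>. prefix y \<in> Q}"
    unfolding Q_def prefix_def
    by (rule prefix_determined_eq_prefix_preimage[OF prefix_determined_Diff[OF assms(5)] Diff_subset])
  have "fin_def_by A \<Lambda> C {i. P \<noteq> {}} {j. Q \<noteq> {}} (\<lambda>_. k) (\<lambda>_. k)
      (from_nat_into P) (from_nat_into Q)"
    unfolding fin_def_by_def
  proof (intro conjI)
    show "\<forall>i\<in>{i. P \<noteq> {}}. from_nat_into P i \<in> Bwords (SigmaA A)"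
      using \<open>P \<subseteq> Bwords (SigmaA A)\<close> from_nat_into[of P] by blast
    show "\<forall>j\<in>{j. Q \<noteq> {}}. from_nat_into Q j \<in> Bwords (SigmaA A)"
      using \<open>Q \<subseteq> Bwords (SigmaA A)\<close> from_nat_into[of Q] by blast
    show "C = {y \<in> \<Lambda>. \<exists>i\<in>{i. P \<noteq> {}}. word_at y 0 (1 + k) = from_nat_into P i}"
      using C_eq preimage_countable_eq_enumeration[OF \<open>countable P\<close>, of \<Lambda> prefix]
      unfolding prefix_def by simp
    show "\<Lambda> - C = {y \<in> \<Lambda>. \<exists>j\<in>{j. Q \<noteq> {}}. word_at y 0 (1 + k) = from_nat_into Q j}"
      using D_eq preimage_countable_eq_enumeration[OF \<open>countable Q\<close>, of \<Lambda> prefix]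
      unfolding prefix_def by simp
  qed
  moreover have "(SUP i\<in>{i. P \<noteq> {}}. enat k) = enat k" using \<open>P \<noteq> {}\<close> by simp
  ultimately show ?thesis unfolding fin_def_anticipation_def using assms(3) by blast
qed

lemma fin_def_anticipation_imp_finitely_defined:
  "fin_def_anticipation A \<Lambda> C k \<Longrightarrow> finitely_defined A \<Lambda> C"
  unfolding fin_def_anticipation_def finitely_defined_def by blast

lemma seq_len_fin:
  assumes "is_fin x"
  shows "seq_len x = enat (the_enat (seq_len x))" "x (the_enat (seq_len x)) = None"
  using assms LeastI_ex[of "\<lambda>i. x i = None"] unfolding is_fin_def seq_len_def by auto

lemma Zcyl_fin_eq:
  assumes "is_fin x"
  shows "Zcyl A x F = {y \<in> SigmaA A. (\<forall>i < the_enat (seq_len x). y i = x i)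
                                     \<and> y (the_enat (seq_len x)) \<notin> Some ` F}"
proof -
  obtain m where "seq_len x = enat m" using seq_len_fin(1)[OF assms] by blast
  then show ?thesis unfolding Zcyl_def by simp
qed

lemma self_in_Zcyl: "x \<in> SigmaA A \<Longrightarrow> is_fin x \<Longrightarrow> x \<in> Zcyl A x F"
  using seq_len_fin(2)[of x] by (auto simp: Zcyl_fin_eq)

lemma prefix_determined_Zcyl:
  assumes "\<Lambda> \<subseteq> SigmaA A" "is_fin x"
  shows "prefix_determined \<Lambda> (Zcyl A x F \<inter> \<Lambda>) (Suc (the_enat (seq_len x)))"
  using assms unfolding prefix_determined_def Zcyl_fin_eq[OF assms(2)]
  by (simp add: subset_iff)

lemma prefix_determined_Zcyl_empty:
  assumes "\<Lambda> \<subseteq> SigmaA A" "is_fin x"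
  shows "prefix_determined \<Lambda> (Zcyl A x {} \<inter> \<Lambda>) (the_enat (seq_len x))"
  using assms unfolding prefix_determined_def Zcyl_fin_eq[OF assms(2)] by auto

text \<open>For \<open>l(x) = 0\<close> the truncated anticipation \<open>l(x) - 1\<close> is \<open>0\<close>, which is still correct.\<close>

theorem mainTheorem3:
  fixes A :: "'a set" and \<Lambda> :: "'a seq set" and x :: "'a seq" and F :: "'a set"
  assumes "countable A"
    and "shift_space A \<Lambda>"
    and "x \<in> \<Lambda>" and "is_fin x"
    and "F \<subseteq> Lset \<Lambda>" and "finite F" and "F \<noteq> {}"
  shows "finitely_defined A \<Lambda> (Zcyl A x {} \<inter> \<Lambda>)
       \<and> finitely_defined A \<Lambda> (Zcyl A x F \<inter> \<Lambda>)
       \<and> fin_def_anticipation A \<Lambda> (Zcyl A x {} \<inter> \<Lambda>) (the_enat (seq_len x) - 1)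
       \<and> fin_def_anticipation A \<Lambda> (Zcyl A x F \<inter> \<Lambda>) (the_enat (seq_len x))"
proof -
  let ?m = "the_enat (seq_len x)"
  have \<Lambda>: "\<Lambda> \<subseteq> SigmaA A" using assms(2) by (rule shift_space_subset_SigmaA)
  have x_in: "x \<in> Zcyl A x G \<inter> \<Lambda>" for G
    using self_in_Zcyl \<Lambda> assms(3,4) by blast
  have "prefix_determined \<Lambda> (Zcyl A x {} \<inter> \<Lambda>) (Suc (?m - 1))"
    using prefix_determined_Zcyl_empty[OF \<Lambda> assms(4)] by (rule prefix_determined_mono) simp
  then have Z: "fin_def_anticipation A \<Lambda> (Zcyl A x {} \<inter> \<Lambda>) (?m - 1)"
    using prefix_determined_fin_def_anticipation assms(1) \<Lambda> x_in by blast
  have ZF: "fin_def_anticipation A \<Lambda> (Zcyl A x F \<inter> \<Lambda>) ?m"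
    using prefix_determined_fin_def_anticipation[OF assms(1) \<Lambda> _ _
        prefix_determined_Zcyl[OF \<Lambda> assms(4)]] x_in by blast
  show ?thesis using Z ZF fin_def_anticipation_imp_finitely_defined by blast
qed

end
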